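(* Let $r\ge 3$ and let $t\ge 6$ be even. Then there exists a $(r,t,4)$-staircase graph $G$ such that the graph $G-v_\infty$ (obtained by deleting $v_\infty$ and its incident edges) admits a proper edge colouring with $r+1$ colours (edges sharing a vertex receive different colours).
   Context: Staircase graph: Let $r\ge 2$ and $t\ge 2$ be integers, $s=\lfloor (t-1)/2\rfloor$, and $a_0$ a positive integer; if $t$ is odd assume $t\ge 3$. An $(r,t,a_0)$-staircase graph is a finite simple graph $G$ whose vertex set is a disjoint union $\{v_\infty\}\cup V_0\cup V_1\cup\cdots\cup V_s$ such that: $|V_0|=a_0$ and $v_\infty$ is adjacent to every vertex of $V_0$ and to no other vertex; for each $i$ with $0\le i\le s-1$ (if $t$ is even) or $0\le i\le s-2$ (if $t$ is odd), every vertex of $V_i$ has exactly $r$ neighbours in $V_{i+1}$ and every vertex of $V_{i+1}$ has exactly one neighbour in $V_i$; if $t$ is even, every vertex of $V_s$ has exactly $r$ neighbours in $V_s$; if $t$ is odd, every vertex of $V_{s-1}$ has exactly $r$ neighbours in $V_s$ and every vertex of $V_s$ has exactly $r+1$ neighbours in $V_{s-1}$; and there are no other edges. *)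

theory Defs
  imports Main
begin

definition simple_graph :: "'a set \<Rightarrow> ('a \<Rightarrow> 'a \<Rightarrow> bool) \<Rightarrow> bool" where
  "simple_graph V E \<longleftrightarrow> finite V \<and> (\<forall>x y. E x y \<longrightarrow> E y x)
     \<and> (\<forall>x. \<not> E x x) \<and> (\<forall>x y. E x y \<longrightarrow> x \<in> V \<and> y \<in> V)"

definition staircase ::
  "nat \<Rightarrow> nat \<Rightarrow> nat \<Rightarrow> 'a set \<Rightarrow> ('a \<Rightarrow> 'a \<Rightarrow> bool) \<Rightarrow> 'a \<Rightarrow> (nat \<Rightarrow> 'a set) \<Rightarrow> bool" where
  "staircase r t a0 V E vinf L \<longleftrightarrow>
    (let s = (t - 1) div 2 in
     simple_graph V E
     \<and> V = insert vinf (\<Union>i\<in>{..s}. L i)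
     \<and> (\<forall>i\<le>s. vinf \<notin> L i)
     \<and> (\<forall>i\<le>s. \<forall>j\<le>s. i \<noteq> j \<longrightarrow> L i \<inter> L j = {})
     \<and> card (L 0) = a0
     \<and> (\<forall>x. E vinf x \<longleftrightarrow> x \<in> L 0)
     \<and> (\<forall>i. (if even t then i < s else i + 2 \<le> s) \<longrightarrow>
           (\<forall>v\<in>L i. card {w\<in>L (Suc i). E v w} = r)
         \<and> (\<forall>w\<in>L (Suc i). card {v\<in>L i. E w v} = 1))
     \<and> (even t \<longrightarrow> (\<forall>v\<in>L s. card {w\<in>L s. E v w} = r))
     \<and> (odd t \<longrightarrow> (\<forall>v\<in>L (s - 1). card {w\<in>L s. E v w} = r)
                  \<and> (\<forall>w\<in>L s. card {v\<in>L (s - 1). E w v} = r + 1))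
     \<and> (\<forall>x y. E x y \<longrightarrow>
           x = vinf \<or> y = vinf
         \<or> (\<exists>i<s. (x \<in> L i \<and> y \<in> L (Suc i)) \<or> (y \<in> L i \<and> x \<in> L (Suc i)))
         \<or> (even t \<and> x \<in> L s \<and> y \<in> L s)))"

definition proper_edge_colouring_minus ::
  "'a set \<Rightarrow> ('a \<Rightarrow> 'a \<Rightarrow> bool) \<Rightarrow> 'a \<Rightarrow> nat \<Rightarrow> ('a \<Rightarrow> 'a \<Rightarrow> nat) \<Rightarrow> bool" where
  "proper_edge_colouring_minus V E u k c \<longleftrightarrow>
     (\<forall>x y. E x y \<and> x \<noteq> u \<and> y \<noteq> u \<longrightarrow> c x y = c y x \<and> c x y < k)
   \<and> (\<forall>x y z. E x y \<and> E x z \<and> y \<noteq> z \<and> x \<noteq> u \<and> y \<noteq> u \<and> z \<noteq> u \<longrightarrow> c x y \<noteq> c x z)"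

end

(*
  Hang four complete r-ary trees of depth s = (t - 1) div 2 below v_inf and colour the tree
  edges top-down with colours modulo r + 1: if the parent edge of a vertex has colour c, the
  edge to its child with last base-r digit d gets colour c + d + 1, so the child edges avoid c.
  The r leaves below a vertex whose parent edge has colour Q thus have parent edges of colour
  Q + a + 1, a their last digit, and each needs r further edges using exactly the other colours.
  Leaves of the even trees are joined to leaves of the odd trees below the same position: digit
  a is joined, for each t < r, to digit a + 2t in tree p + 1 if 2t < r and in tree p - 1
  otherwise, with colour Q if t = 0 and Q + (a + t) + 1 otherwise.  At the even end these are
  all colours but Q + a + 1; at the odd end, with digit b = a + 2t, they are Q and the
  Q + (b - t) + 1 for t > 0, i.e. all colours but Q + b + 1.  Splitting the shifts between the
  two neighbouring odd trees makes 2t determine t also when r is even.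
*)

theory Submission
  imports Defs "HOL-Library.Countable" "HOL-Number_Theory.Cong"
begin

lemma mod_add_left_cancel_less:
  fixes a x y m :: nat
  assumes "(a + x) mod m = (a + y) mod m" and "x < m" and "y < m"
  shows "x = y"
  using assms by (metis cong_add_lcancel_nat cong_def cong_less_modulus_unique_nat)

definition digit_shift :: "nat \<Rightarrow> nat \<Rightarrow> nat \<Rightarrow> nat" where
  "digit_shift r z e = r * (z div r) + (z + e) mod r"

lemma digit_shift_div [simp]: "0 < r \<Longrightarrow> digit_shift r z e div r = z div r"
  by (simp add: digit_shift_def)

lemma digit_shift_mod [simp]: "digit_shift r z e mod r = (z + e) mod r"
  by (simp add: digit_shift_def)

lemma digit_shift_less:
  assumes "z < r ^ s" and "0 < s"
  shows "digit_shift r z e < r ^ s"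
proof -
  obtain s' where s: "s = Suc s'"
    using assms(2) gr0_implies_Suc by blast
  have r: "0 < r"
    using assms by (cases r) (auto simp: s)
  have "z div r < r ^ s'"
    using assms(1) by (simp add: s less_mult_imp_div_less mult.commute)
  then have "z div r + 1 \<le> r ^ s'"
    by simp
  then have "r * (z div r + 1) \<le> r ^ s"
    unfolding s power_Suc by (rule mult_le_mono2)
  moreover have "(z + e) mod r < r"
    using r by simp
  ultimately show ?thesis
    unfolding digit_shift_def by (simp add: algebra_simps)
qed

lemma digit_shift_digit_shift:
  "0 < r \<Longrightarrow> digit_shift r (digit_shift r z e) e' = digit_shift r z (e + e')"
  by (simp add: digit_shift_def mod_add_left_eq add.assoc)

lemma digit_shift_mult_self: "digit_shift r z (r * k) = z"
  by (simp add: digit_shift_def)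

definition cross :: "nat \<Rightarrow> nat \<Rightarrow> nat \<Rightarrow> nat \<Rightarrow> nat \<times> nat" where
  "cross r p z t = (if 2 * t < r then Suc p else (p + 3) mod 4, digit_shift r z (2 * t))"

definition cross_back :: "nat \<Rightarrow> nat \<Rightarrow> nat \<Rightarrow> nat \<Rightarrow> nat \<times> nat" where
  "cross_back r p z t = (if 2 * t < r then p - 1 else (p + 1) mod 4, digit_shift r z (2 * (r - t)))"

(* Recovers t from the two ends of a bottom edge: the odd tree on either side of p tells whether
   the last digit was shifted by 2t or by 2t - r. *)
definition cross_index :: "nat \<Rightarrow> nat \<Rightarrow> nat \<Rightarrow> nat \<Rightarrow> nat \<Rightarrow> nat" where
  "cross_index r p z p' z' =
     (let d = (z' + r - z mod r) mod r in if p' = Suc p then d div 2 else (d + r) div 2)"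

lemma cross_parity:
  assumes "even p" and "p < 4" and "cross r p z t = (p', z')"
  shows "odd p'" and "p' < 4"
proof -
  have "p = 0 \<or> p = 2"
    using assms(1,2) by presburger
  then show "odd p'" "p' < 4"
    using assms(3) by (auto simp: cross_def split: if_splits)
qed

lemma cross_back_parity:
  assumes "odd p" and "p < 4" and "cross_back r p z t = (p', z')"
  shows "even p'" and "p' < 4"
proof -
  have "p = 1 \<or> p = 3"
    using assms(1,2) by presburger
  then show "even p'" "p' < 4"
    using assms(3) by (auto simp: cross_back_def split: if_splits)
qed

lemma cross_back_cross:
  assumes "even p" and "p < 4" and "t < r" and "cross r p z t = (p', z')"
  shows "cross_back r p' z' t = (p, z)"
proof -
  have "p = 0 \<or> p = 2"
    using assms(1,2) by presburger
  moreover have "2 * t + 2 * (r - t) = r * 2"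
    using assms(3) by simp
  ultimately show ?thesis
    using assms by (auto simp: cross_def cross_back_def digit_shift_digit_shift digit_shift_mult_self)
qed

lemma cross_cross_back:
  assumes "odd p" and "p < 4" and "t < r" and "cross_back r p z t = (p', z')"
  shows "cross r p' z' t = (p, z)"
proof -
  have "p = 1 \<or> p = 3"
    using assms(1,2) by presburger
  moreover have "2 * (r - t) + 2 * t = r * 2"
    using assms(3) by simp
  ultimately show ?thesis
    using assms by (auto simp: cross_def cross_back_def digit_shift_digit_shift digit_shift_mult_self)
qed

lemma cross_index_cross:
  assumes "even p" and "p < 4" and "t < r" and "cross r p z t = (p', z')"
  shows "cross_index r p z p' z' = t"
proof -
  have z': "z' mod r = (z mod r + 2 * t) mod r"
    using assms(4) by (auto simp: cross_def mod_add_left_eq)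
  have "z' + r - z mod r = z' + (r - z mod r)"
    using assms(3) by (simp add: less_imp_le)
  then have "(z' + r - z mod r) mod r = (z' mod r + (r - z mod r)) mod r"
    by (simp add: mod_add_left_eq)
  also have "\<dots> = (z mod r + 2 * t + (r - z mod r)) mod r"
    unfolding z' by (metis mod_add_left_eq)
  also have "\<dots> = (2 * t) mod r"
    using assms(3) by simp
  finally have d: "(z' + r - z mod r) mod r = (2 * t) mod r" .
  show ?thesis
  proof (cases "2 * t < r")
    case True
    then show ?thesis
      using assms(4) d by (simp add: cross_def cross_index_def)
  next
    case False
    have "p = 0 \<or> p = 2"
      using assms(1,2) by presburger
    then have "p' \<noteq> Suc p"
      using False assms(4) by (auto simp: cross_def)
    moreover have "(2 * t) mod r = 2 * t - r"
      using False assms(3) by (simp add: le_mod_geq)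
    ultimately show ?thesis
      using False d by (simp add: cross_index_def)
  qed
qed

(* Node i p z lies in layer i of tree p; the base-r digits of z spell its path from the root. *)
datatype vertex = Apex | Node nat nat nat

instance vertex :: countable
  by countable_datatype

definition layer :: "nat \<Rightarrow> nat \<Rightarrow> vertex set" where
  "layer r i = {Node i p z | p z. p < 4 \<and> z < r ^ i}"

fun parent :: "nat \<Rightarrow> vertex \<Rightarrow> vertex" where
  "parent r (Node (Suc i) p z) = Node i p (z div r)"
| "parent r _ = Apex"

inductive stair_arc :: "nat \<Rightarrow> nat \<Rightarrow> vertex \<Rightarrow> vertex \<Rightarrow> bool" for r s where
  apex_arc: "p < 4 \<Longrightarrow> stair_arc r s Apex (Node 0 p 0)"
| tree_arc: "i < s \<Longrightarrow> p < 4 \<Longrightarrow> z < r ^ Suc i \<Longrightarrow> stair_arc r s (Node i p (z div r)) (Node (Suc i) p z)"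
| cross_arc: "even p \<Longrightarrow> p < 4 \<Longrightarrow> z < r ^ s \<Longrightarrow> t < r \<Longrightarrow> cross r p z t = (p', z')
    \<Longrightarrow> stair_arc r s (Node s p z) (Node s p' z')"

definition stair_adj :: "nat \<Rightarrow> nat \<Rightarrow> vertex \<Rightarrow> vertex \<Rightarrow> bool" where
  "stair_adj r s x y \<longleftrightarrow> stair_arc r s x y \<or> stair_arc r s y x"

definition stair_vertices :: "nat \<Rightarrow> nat \<Rightarrow> vertex set" where
  "stair_vertices r s = insert Apex (\<Union>i\<in>{..s}. layer r i)"

lemma finite_layer: "finite (layer r i)"
proof -
  have "layer r i = (\<lambda>(p, z). Node i p z) ` ({..<4} \<times> {..<r ^ i})"
    by (auto simp: layer_def)
  then show ?thesis
    by simp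
qed

lemma card_layer_0: "card (layer r 0) = 4"
proof -
  have "layer r 0 = (\<lambda>p. Node 0 p 0) ` {..<4}"
    by (auto simp: layer_def)
  then show ?thesis
    by (simp add: card_image inj_on_def)
qed

lemma parent_in_layer:
  assumes "Node (Suc i) p z \<in> layer r (Suc i)"
  shows "parent r (Node (Suc i) p z) \<in> layer r i"
  using assms by (auto simp: layer_def less_mult_imp_div_less mult.commute)

lemma child_less:
  fixes z d r :: nat
  assumes "z < r ^ i" and "d < r"
  shows "r * z + d < r ^ Suc i"
proof -
  have "r * (z + 1) \<le> r * r ^ i"
    using assms(1) by (intro mult_le_mono2) simp
  then show ?thesis
    using assms(2) by simp
qed

lemma cross_in_layer:
  assumes "0 < s" and "even p" and "p < 4" and "z < r ^ s" and "cross r p z t = (p', z')"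
  shows "Node s p' z' \<in> layer r s"
  using assms cross_parity[OF assms(2,3,5)] digit_shift_less[OF assms(4,1)]
  by (auto simp: layer_def cross_def)

lemma cross_back_in_layer:
  assumes "0 < s" and "odd p" and "p < 4" and "z < r ^ s" and "cross_back r p z t = (p', z')"
  shows "Node s p' z' \<in> layer r s"
  using assms cross_back_parity[OF assms(2,3,5)] digit_shift_less[OF assms(4,1)]
  by (auto simp: layer_def cross_back_def)

lemma stair_arc_layers:
  assumes "stair_arc r s x y" and "0 < s"
  shows "(x = Apex \<and> y \<in> layer r 0) \<or> (\<exists>i<s. x \<in> layer r i \<and> y \<in> layer r (Suc i))
    \<or> (x \<in> layer r s \<and> y \<in> layer r s)"
  using assms
proof cases
  case (tree_arc i p z)
  then show ?thesis
    using parent_in_layer[of i p z r] by (auto simp: layer_def)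
next
  case (cross_arc p z t p' z')
  then show ?thesis
    using cross_in_layer[OF assms(2)] by (auto simp: layer_def)
qed (auto simp: layer_def)

lemma stair_arc_in_vertices:
  assumes "stair_arc r s x y" and "0 < s"
  shows "x \<in> stair_vertices r s" and "y \<in> stair_vertices r s"
  using stair_arc_layers[OF assms] by (auto simp: stair_vertices_def)

lemma stair_arc_irrefl: "\<not> stair_arc r s x x"
proof
  assume "stair_arc r s x x"
  then show False
    by cases (auto dest: cross_parity)
qed

lemma stair_nbrs_inner:
  assumes "i < s" and "p < 4" and "z < r ^ i"
  shows "{y. stair_adj r s (Node i p z) y}
    = insert (parent r (Node i p z)) ((\<lambda>d. Node (Suc i) p (r * z + d)) ` {..<r})"
proof (intro set_eqI iffI)
  fix y
  assume "y \<in> {y. stair_adj r s (Node i p z) y}"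
  then consider "stair_arc r s (Node i p z) y" | "stair_arc r s y (Node i p z)"
    by (auto simp: stair_adj_def)
  then show "y \<in> insert (parent r (Node i p z)) ((\<lambda>d. Node (Suc i) p (r * z + d)) ` {..<r})"
  proof cases
    case 1
    then obtain z' where "y = Node (Suc i) p z'" "z' div r = z" "z' < r ^ Suc i"
      using assms(1) by cases auto
    moreover from this have "0 < r"
      by (cases r) auto
    ultimately show ?thesis
      by (auto intro!: image_eqI[of _ _ "z' mod r"])
  next
    case 2
    then show ?thesis
      using assms(1) by cases auto
  qed
next
  fix y
  assume y: "y \<in> insert (parent r (Node i p z)) ((\<lambda>d. Node (Suc i) p (r * z + d)) ` {..<r})"
  have "stair_arc r s (parent r (Node i p z)) (Node i p z)"
  proof (cases i)
    case 0
    then show ?thesis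
      using assms by (simp add: apex_arc)
  next
    case (Suc i')
    then show ?thesis
      using assms tree_arc[of i' s p z r] by simp
  qed
  moreover have "stair_arc r s (Node i p z) (Node (Suc i) p (r * z + d))" if "d < r" for d
    using tree_arc[OF assms(1,2) child_less[OF assms(3) that]] that by simp
  ultimately show "y \<in> {y. stair_adj r s (Node i p z) y}"
    using y by (auto simp: stair_adj_def)
qed

lemma stair_nbrs_bottom_even:
  assumes "0 < s" and "even p" and "p < 4" and "z < r ^ s"
  shows "{y. stair_adj r s (Node s p z) y}
    = insert (parent r (Node s p z)) ((\<lambda>t. case_prod (Node s) (cross r p z t)) ` {..<r})"
proof (intro set_eqI iffI)
  fix y
  assume "y \<in> {y. stair_adj r s (Node s p z) y}"
  then consider "stair_arc r s (Node s p z) y" | "stair_arc r s y (Node s p z)"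
    by (auto simp: stair_adj_def)
  then show "y \<in> insert (parent r (Node s p z)) ((\<lambda>t. case_prod (Node s) (cross r p z t)) ` {..<r})"
  proof cases
    case 1
    then show ?thesis
    proof cases
      case (cross_arc t p' z')
      then show ?thesis
        by (auto intro!: image_eqI[of _ _ t])
    qed auto
  next
    case 2
    then show ?thesis
      using assms(2,3) by cases (auto dest: cross_parity)
  qed
next
  fix y
  assume y: "y \<in> insert (parent r (Node s p z)) ((\<lambda>t. case_prod (Node s) (cross r p z t)) ` {..<r})"
  obtain s' where s': "s = Suc s'"
    using assms(1) gr0_implies_Suc by blast
  have "stair_arc r s (parent r (Node s p z)) (Node s p z)"
    using assms tree_arc[of s' s p z r] by (simp add: s')
  moreover have "stair_arc r s (Node s p z) (case_prod (Node s) (cross r p z t))" if "t < r" for t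
    using cross_arc[OF assms(2,3,4) that] by (cases "cross r p z t") simp
  ultimately show "y \<in> {y. stair_adj r s (Node s p z) y}"
    using y by (auto simp: stair_adj_def)
qed

lemma stair_nbrs_bottom_odd:
  assumes "0 < s" and "odd p" and "p < 4" and "z < r ^ s"
  shows "{y. stair_adj r s (Node s p z) y}
    = insert (parent r (Node s p z)) ((\<lambda>t. case_prod (Node s) (cross_back r p z t)) ` {..<r})"
proof (intro set_eqI iffI)
  fix y
  assume "y \<in> {y. stair_adj r s (Node s p z) y}"
  then consider "stair_arc r s (Node s p z) y" | "stair_arc r s y (Node s p z)"
    by (auto simp: stair_adj_def)
  then show "y \<in> insert (parent r (Node s p z)) ((\<lambda>t. case_prod (Node s) (cross_back r p z t)) ` {..<r})"
  proof cases
    case 1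
    then show ?thesis
      using assms(2) by cases auto
  next
    case 2
    then show ?thesis
    proof cases
      case (cross_arc pa za t)
      then have "cross_back r p z t = (pa, za)"
        using cross_back_cross by blast
      then show ?thesis
        using cross_arc by (auto intro!: image_eqI[of _ _ t])
    qed auto
  qed
next
  fix y
  assume y: "y \<in> insert (parent r (Node s p z)) ((\<lambda>t. case_prod (Node s) (cross_back r p z t)) ` {..<r})"
  obtain s' where s': "s = Suc s'"
    using assms(1) gr0_implies_Suc by blast
  have "stair_arc r s (parent r (Node s p z)) (Node s p z)"
    using assms tree_arc[of s' s p z r] by (simp add: s')
  moreover have "stair_arc r s (case_prod (Node s) (cross_back r p z t)) (Node s p z)" if "t < r" for t
  proof (cases "cross_back r p z t")
    case (Pair pa za)
    have "za < r ^ s"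
      using cross_back_in_layer[OF assms Pair] by (simp add: layer_def)
    then show ?thesis
      using cross_arc[OF cross_back_parity[OF assms(2,3) Pair] _ that cross_cross_back[OF assms(2,3) that Pair]]
      by (simp add: Pair)
  qed
  ultimately show "y \<in> {y. stair_adj r s (Node s p z) y}"
    using y by (auto simp: stair_adj_def)
qed

lemma Collect_in_eq_of_insert:
  assumes "{y. P y} = insert a A" and "a \<notin> L" and "A \<subseteq> L"
  shows "{y \<in> L. P y} = A"
proof -
  have "P y \<longleftrightarrow> y = a \<or> y \<in> A" for y
    using assms(1) by (simp add: set_eq_iff)
  then show ?thesis
    using assms(2,3) by auto
qed

lemma card_children:
  assumes "i < s" and "x \<in> layer r i"
  shows "card {w \<in> layer r (Suc i). stair_adj r s x w} = r"
proof -
  obtain p z where x: "x = Node i p z" "p < 4" "z < r ^ i"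
    using assms(2) by (auto simp: layer_def)
  have "parent r x \<notin> layer r (Suc i)"
    using x(1) by (cases i) (auto simp: layer_def)
  moreover have "(\<lambda>d. Node (Suc i) p (r * z + d)) ` {..<r} \<subseteq> layer r (Suc i)"
    using child_less[OF x(3)] x(2) by (auto simp: layer_def)
  ultimately have "{w \<in> layer r (Suc i). stair_adj r s x w} = (\<lambda>d. Node (Suc i) p (r * z + d)) ` {..<r}"
    using Collect_in_eq_of_insert[OF stair_nbrs_inner[OF assms(1) x(2,3)]] x(1) by simp
  then show ?thesis
    by (simp add: card_image inj_on_def)
qed

lemma card_parents:
  assumes "i < s" and "w \<in> layer r (Suc i)"
  shows "card {v \<in> layer r i. stair_adj r s w v} = 1"
proof -
  obtain p z where w: "w = Node (Suc i) p z" "p < 4" "z < r ^ Suc i"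
    using assms(2) by (auto simp: layer_def)
  have "stair_adj r s w (parent r w)"
    using tree_arc[OF assms(1) w(2,3)] w(1) by (simp add: stair_adj_def)
  moreover have "parent r w \<in> layer r i"
    using parent_in_layer[of i p z r] assms(2) w(1) by simp
  moreover have "v = parent r w" if "v \<in> layer r i" and "stair_adj r s w v" for v
  proof -
    from that(2) consider "stair_arc r s w v" | "stair_arc r s v w"
      by (auto simp: stair_adj_def)
    then show ?thesis
      by cases (use that(1) w(1) in \<open>auto simp: layer_def elim: stair_arc.cases\<close>)
  qed
  ultimately have "{v \<in> layer r i. stair_adj r s w v} = {parent r w}"
    by blast
  then show ?thesis
    by simp
qed

lemma inj_on_cross:
  assumes "even p" and "p < 4"
  shows "inj_on (\<lambda>t. case_prod (Node s) (cross r p z t)) {..<r}"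
proof (rule inj_onI)
  fix t1 t2
  assume t: "t1 \<in> {..<r}" "t2 \<in> {..<r}"
    and same: "case_prod (Node s) (cross r p z t1) = case_prod (Node s) (cross r p z t2)"
  obtain p' z' where t1_cross: "cross r p z t1 = (p', z')"
    by (cases "cross r p z t1")
  moreover from same t1_cross have "cross r p z t2 = (p', z')"
    by (cases "cross r p z t2") simp
  ultimately show "t1 = t2"
    using cross_index_cross[OF assms] t by (metis lessThan_iff)
qed

lemma inj_on_cross_back:
  assumes "odd p" and "p < 4"
  shows "inj_on (\<lambda>t. case_prod (Node s) (cross_back r p z t)) {..<r}"
proof (rule inj_onI)
  fix t1 t2
  assume t: "t1 \<in> {..<r}" "t2 \<in> {..<r}"
    and same: "case_prod (Node s) (cross_back r p z t1) = case_prod (Node s) (cross_back r p z t2)"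
  obtain pa za where t1_back: "cross_back r p z t1 = (pa, za)"
    by (cases "cross_back r p z t1")
  with same have "cross_back r p z t2 = (pa, za)"
    by (cases "cross_back r p z t2") simp
  with t t1_back have "cross r pa za t1 = (p, z)" "cross r pa za t2 = (p, z)"
    using cross_cross_back[OF assms] by auto
  then show "t1 = t2"
    using cross_index_cross[OF cross_back_parity[OF assms t1_back]] t by (metis lessThan_iff)
qed

lemma card_bottom_nbrs:
  assumes "0 < s" and "v \<in> layer r s"
  shows "card {w \<in> layer r s. stair_adj r s v w} = r"
proof -
  obtain p z where v: "v = Node s p z" "p < 4" "z < r ^ s"
    using assms(2) by (auto simp: layer_def)
  have parent: "parent r v \<notin> layer r s"
    using v(1) assms(1) by (cases s) (auto simp: layer_def)
  show ?thesis
  proof (cases "even p")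
    case True
    have "(\<lambda>t. case_prod (Node s) (cross r p z t)) ` {..<r} \<subseteq> layer r s"
      using cross_in_layer[OF assms(1) True v(2,3)] by (auto split: prod.splits)
    then have "{w \<in> layer r s. stair_adj r s v w} = (\<lambda>t. case_prod (Node s) (cross r p z t)) ` {..<r}"
      using Collect_in_eq_of_insert[OF stair_nbrs_bottom_even[OF assms(1) True v(2,3)]] parent v(1)
      by simp
    then show ?thesis
      using inj_on_cross[OF True v(2)] by (simp add: card_image)
  next
    case False
    have "(\<lambda>t. case_prod (Node s) (cross_back r p z t)) ` {..<r} \<subseteq> layer r s"
      using cross_back_in_layer[OF assms(1) False v(2,3)] by (auto split: prod.splits)
    then have "{w \<in> layer r s. stair_adj r s v w} = (\<lambda>t. case_prod (Node s) (cross_back r p z t)) ` {..<r}"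
      using Collect_in_eq_of_insert[OF stair_nbrs_bottom_odd[OF assms(1) False v(2,3)]] parent v(1)
      by simp
    then show ?thesis
      using inj_on_cross_back[OF False v(2)] by (simp add: card_image)
  qed
qed

lemma stair_adj_Apex: "stair_adj r s Apex x \<longleftrightarrow> x \<in> layer r 0"
proof
  assume "stair_adj r s Apex x"
  then show "x \<in> layer r 0"
    by (auto simp: stair_adj_def layer_def elim: stair_arc.cases)
next
  assume "x \<in> layer r 0"
  then show "stair_adj r s Apex x"
    by (auto simp: stair_adj_def layer_def intro: apex_arc)
qed

lemma staircase_stair_graph:
  assumes "0 < s" and "even t" and "s = (t - 1) div 2"
  shows "staircase r t 4 (stair_vertices r s) (stair_adj r s) Apex (layer r)"
proof -
  have "simple_graph (stair_vertices r s) (stair_adj r s)"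
    using stair_arc_irrefl stair_arc_in_vertices[OF _ assms(1)]
    unfolding simple_graph_def stair_adj_def by (auto simp: stair_vertices_def finite_layer)
  moreover have "\<forall>i\<le>s. Apex \<notin> layer r i" "\<forall>i\<le>s. \<forall>j\<le>s. i \<noteq> j \<longrightarrow> layer r i \<inter> layer r j = {}"
    by (auto simp: layer_def)
  moreover have "\<forall>i. (if even t then i < s else i + 2 \<le> s) \<longrightarrow>
      (\<forall>v\<in>layer r i. card {w\<in>layer r (Suc i). stair_adj r s v w} = r)
      \<and> (\<forall>w\<in>layer r (Suc i). card {v\<in>layer r i. stair_adj r s w v} = 1)"
    using assms(2) card_children card_parents by simp
  moreover have "\<forall>x y. stair_adj r s x y \<longrightarrow> x = Apex \<or> y = Apex
      \<or> (\<exists>i<s. (x \<in> layer r i \<and> y \<in> layer r (Suc i)) \<or> (y \<in> layer r i \<and> x \<in> layer r (Suc i)))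
      \<or> (even t \<and> x \<in> layer r s \<and> y \<in> layer r s)"
    using stair_arc_layers[OF _ assms(1)] assms(2) unfolding stair_adj_def by blast
  ultimately show ?thesis
    using assms(2) card_bottom_nbrs[OF assms(1)]
    unfolding staircase_def Let_def assms(3)[symmetric]
    by (simp add: stair_vertices_def card_layer_0 stair_adj_Apex)
qed

(* Colour of the edge from the parent of Node i p z; the value 0 at the roots belongs to the
   uncoloured apex edges. *)
fun tree_colour :: "nat \<Rightarrow> nat \<Rightarrow> nat \<Rightarrow> nat" where
  "tree_colour r 0 z = 0"
| "tree_colour r (Suc i) z = (tree_colour r i (z div r) + Suc (z mod r)) mod Suc r"

(* Offset, relative to the grandparent edge colour, of the bottom edge with shift t at an even
   leaf with position z. *)
definition cross_slot :: "nat \<Rightarrow> nat \<Rightarrow> nat \<Rightarrow> nat" where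
  "cross_slot r z t = (if t = 0 then 0 else Suc ((z + t) mod r))"

definition cross_colour :: "nat \<Rightarrow> nat \<Rightarrow> nat \<Rightarrow> nat \<Rightarrow> nat" where
  "cross_colour r s z t = (tree_colour r (s - 1) (z div r) + cross_slot r z t) mod Suc r"

fun stair_colour :: "nat \<Rightarrow> nat \<Rightarrow> vertex \<Rightarrow> vertex \<Rightarrow> nat" where
  "stair_colour r s (Node i p z) (Node j p' z') =
     (if i < j then tree_colour r j z' else if j < i then tree_colour r i z
      else if even p then cross_colour r s z (cross_index r p z p' z')
      else cross_colour r s z' (cross_index r p' z' p z))"
| "stair_colour r s _ _ = 0"

lemma tree_colour_less: "tree_colour r i z < Suc r"
  by (cases i) simp_all

lemma stair_colour_less: "stair_colour r s x y < Suc r"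
  by (cases "(r, s, x, y)" rule: stair_colour.cases) (simp_all add: tree_colour_less cross_colour_def)

lemma stair_colour_sym:
  assumes "stair_arc r s x y" and "x \<noteq> Apex"
  shows "stair_colour r s x y = stair_colour r s y x"
  using assms by cases (auto dest: cross_parity)

lemma inj_on_colour_slots:
  fixes c :: "'a \<Rightarrow> nat"
  assumes "N \<subseteq> insert q (f ` K)"
    and "c q = (b + h) mod m" and "\<And>k. k \<in> K \<Longrightarrow> c (f k) = (b + g k) mod m"
    and "inj_on g K" and "h \<notin> g ` K" and "h < m" and "g ` K \<subseteq> {..<m}"
  shows "inj_on c N"
proof (rule inj_on_subset[OF _ assms(1)])
  have "inj_on (c \<circ> f) K"
  proof (rule inj_onI)
    fix k1 k2
    assume k: "k1 \<in> K" "k2 \<in> K" and "(c \<circ> f) k1 = (c \<circ> f) k2"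
    then have "(b + g k1) mod m = (b + g k2) mod m"
      using assms(3) by simp
    then have "g k1 = g k2"
      using mod_add_left_cancel_less k assms(7) by blast
    then show "k1 = k2"
      using assms(4) k by (simp add: inj_on_eq_iff)
  qed
  moreover have "c q \<noteq> c (f k)" if "k \<in> K" for k
  proof
    assume "c q = c (f k)"
    then have "(b + h) mod m = (b + g k) mod m"
      using assms(2,3) that by simp
    then have "h = g k"
      using mod_add_left_cancel_less that assms(6,7) by blast
    then show False
      using assms(5) that by blast
  qed
  ultimately show "inj_on c (insert q (f ` K))"
    by (auto intro: inj_on_imageI)
qed

lemma cross_slots_less: "cross_slot r z ` {..<r} \<subseteq> {..<Suc r}"
  by (auto simp: cross_slot_def)

lemma inj_on_cross_slot: "inj_on (cross_slot r z) {..<r}"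
proof (rule inj_onI)
  fix t1 t2
  assume t: "t1 \<in> {..<r}" "t2 \<in> {..<r}" and same: "cross_slot r z t1 = cross_slot r z t2"
  show "t1 = t2"
  proof (cases "t1 = 0 \<or> t2 = 0")
    case True
    then show ?thesis
      using same by (auto simp: cross_slot_def split: if_splits)
  next
    case False
    then have "(z + t1) mod r = (z + t2) mod r"
      using same by (simp add: cross_slot_def)
    then show ?thesis
      using mod_add_left_cancel_less[of z t1 r t2] t by blast
  qed
qed

lemma last_digit_notin_cross_slots: "Suc (z mod r) \<notin> cross_slot r z ` {..<r}"
proof
  assume "Suc (z mod r) \<in> cross_slot r z ` {..<r}"
  then obtain t where t: "t < r" and "Suc (z mod r) = cross_slot r z t"
    by auto
  then have "(z + t) mod r = (z + 0) mod r" and "t \<noteq> 0"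
    by (simp_all add: cross_slot_def split: if_splits)
  moreover have "0 < r"
    using t by simp
  ultimately show False
    using mod_add_left_cancel_less[of z t r 0] t by blast
qed

lemma cross_slot_cross_back:
  assumes "t < r" and "cross_back r p z t = (pa, za)"
  shows "cross_slot r za t = cross_slot r z ((r - t) mod r)"
proof (cases "t = 0")
  case False
  have "za mod r = (z + 2 * (r - t)) mod r"
    using assms(2) by (auto simp: cross_back_def)
  then have "(za + t) mod r = (z + 2 * (r - t) + t) mod r"
    by (metis mod_add_left_eq)
  also have "z + 2 * (r - t) + t = (z + (r - t)) + r"
    using assms(1) by simp
  finally have "(za + t) mod r = (z + (r - t)) mod r"
    by (metis mod_add_self2)
  moreover have "(r - t) mod r = r - t"
    using False assms(1) by simp
  ultimately show ?thesis
    using False assms(1) by (simp add: cross_slot_def)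
qed (simp add: cross_slot_def)

lemma inj_on_stair_colour_inner:
  assumes "i < s" and "p < 4" and "z < r ^ i"
  shows "inj_on (stair_colour r s (Node i p z)) {y. stair_adj r s (Node i p z) y}"
proof (rule inj_on_colour_slots[where m = "Suc r" and b = "tree_colour r i z" and h = 0 and g = Suc])
  show "{y. stair_adj r s (Node i p z) y}
    \<subseteq> insert (parent r (Node i p z)) ((\<lambda>d. Node (Suc i) p (r * z + d)) ` {..<r})"
    using stair_nbrs_inner[OF assms] by simp
  show "stair_colour r s (Node i p z) (parent r (Node i p z)) = (tree_colour r i z + 0) mod Suc r"
    by (cases i) (simp_all add: tree_colour_less)
  show "stair_colour r s (Node i p z) (Node (Suc i) p (r * z + d)) = (tree_colour r i z + Suc d) mod Suc r"
    if "d \<in> {..<r}" for d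
    using that by simp
qed (auto simp: inj_on_def)

lemma inj_on_stair_colour_bottom_even:
  assumes "0 < s" and "even p" and "p < 4" and "z < r ^ s"
  shows "inj_on (stair_colour r s (Node s p z)) {y. stair_adj r s (Node s p z) y}"
proof (rule inj_on_colour_slots[where m = "Suc r" and b = "tree_colour r (s - 1) (z div r)"
      and h = "Suc (z mod r)" and g = "cross_slot r z"])
  show "{y. stair_adj r s (Node s p z) y}
    \<subseteq> insert (parent r (Node s p z)) ((\<lambda>t. case_prod (Node s) (cross r p z t)) ` {..<r})"
    using stair_nbrs_bottom_even[OF assms] by simp
  show "stair_colour r s (Node s p z) (parent r (Node s p z))
    = (tree_colour r (s - 1) (z div r) + Suc (z mod r)) mod Suc r"
    using assms(1) by (cases s) simp_all
  show "stair_colour r s (Node s p z) (case_prod (Node s) (cross r p z t))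
    = (tree_colour r (s - 1) (z div r) + cross_slot r z t) mod Suc r" if "t \<in> {..<r}" for t
  proof (cases "cross r p z t")
    case (Pair p' z')
    then show ?thesis
      using cross_index_cross[OF assms(2,3) _ Pair] that assms(2) by (simp add: cross_colour_def)
  qed
  have "0 < r"
    using assms(1,4) by (cases r) (auto simp: power_0_left)
  then show "Suc (z mod r) < Suc r"
    by simp
qed (simp_all add: inj_on_cross_slot last_digit_notin_cross_slots cross_slots_less)

lemma inj_on_stair_colour_bottom_odd:
  assumes "0 < s" and "odd p" and "p < 4" and "z < r ^ s"
  shows "inj_on (stair_colour r s (Node s p z)) {y. stair_adj r s (Node s p z) y}"
proof (rule inj_on_colour_slots[where m = "Suc r" and b = "tree_colour r (s - 1) (z div r)"
      and h = "Suc (z mod r)" and g = "\<lambda>t. cross_slot r z ((r - t) mod r)"])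
  show "{y. stair_adj r s (Node s p z) y}
    \<subseteq> insert (parent r (Node s p z)) ((\<lambda>t. case_prod (Node s) (cross_back r p z t)) ` {..<r})"
    using stair_nbrs_bottom_odd[OF assms] by simp
  show "stair_colour r s (Node s p z) (parent r (Node s p z))
    = (tree_colour r (s - 1) (z div r) + Suc (z mod r)) mod Suc r"
    using assms(1) by (cases s) simp_all
  show "stair_colour r s (Node s p z) (case_prod (Node s) (cross_back r p z t))
    = (tree_colour r (s - 1) (z div r) + cross_slot r z ((r - t) mod r)) mod Suc r"
    if "t \<in> {..<r}" for t
  proof (cases "cross_back r p z t")
    case (Pair pa za)
    have "cross_index r pa za p z = t"
      using cross_index_cross cross_back_parity[OF assms(2,3) Pair] cross_cross_back[OF assms(2,3) _ Pair]
        that by simp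
    moreover have "za div r = z div r"
      using that Pair by (auto simp: cross_back_def)
    ultimately show ?thesis
      using assms(2) that Pair cross_slot_cross_back[of t r p z pa za] by (simp add: cross_colour_def)
  qed
  have reflect_eq: "(r - t) mod r = (if t = 0 then 0 else r - t)" if "t < r" for t
    using that by simp
  have "inj_on (\<lambda>t. (r - t) mod r) {..<r}"
  proof (rule inj_onI)
    fix t1 t2
    assume "t1 \<in> {..<r}" "t2 \<in> {..<r}" "(r - t1) mod r = (r - t2) mod r"
    then show "t1 = t2"
      using reflect_eq[of t1] reflect_eq[of t2] by (auto split: if_splits)
  qed
  moreover have reflect: "(\<lambda>t. (r - t) mod r) ` {..<r} \<subseteq> {..<r}"
    by auto
  ultimately show "inj_on (\<lambda>t. cross_slot r z ((r - t) mod r)) {..<r}"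
    using comp_inj_on[OF _ inj_on_subset[OF inj_on_cross_slot]] by (auto simp: comp_def)
  have "(\<lambda>t. cross_slot r z ((r - t) mod r)) ` {..<r} \<subseteq> cross_slot r z ` {..<r}"
    using reflect by auto
  then show "Suc (z mod r) \<notin> (\<lambda>t. cross_slot r z ((r - t) mod r)) ` {..<r}"
    and "(\<lambda>t. cross_slot r z ((r - t) mod r)) ` {..<r} \<subseteq> {..<Suc r}"
    using last_digit_notin_cross_slots cross_slots_less by blast+
  have "0 < r"
    using assms(1,4) by (cases r) (auto simp: power_0_left)
  then show "Suc (z mod r) < Suc r"
    by simp
qed

lemma inj_on_stair_colour:
  assumes "0 < s" and "x \<in> stair_vertices r s" and "x \<noteq> Apex"
  shows "inj_on (stair_colour r s x) {y. stair_adj r s x y}"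
proof -
  obtain i p z where x: "x = Node i p z" and "i \<le> s" "p < 4" "z < r ^ i"
    using assms(2,3) by (auto simp: stair_vertices_def layer_def)
  then consider "i < s" | "i = s" "even p" | "i = s" "odd p"
    by linarith
  then show ?thesis
    by cases (use x \<open>p < 4\<close> \<open>z < r ^ i\<close> assms(1) in \<open>simp_all add: inj_on_stair_colour_inner
        inj_on_stair_colour_bottom_even inj_on_stair_colour_bottom_odd\<close>)
qed

lemma proper_stair_colour:
  assumes "0 < s"
  shows "proper_edge_colouring_minus (stair_vertices r s) (stair_adj r s) Apex (r + 1) (stair_colour r s)"
  unfolding proper_edge_colouring_minus_def
proof (intro conjI allI impI)
  fix x y
  assume "stair_adj r s x y \<and> x \<noteq> Apex \<and> y \<noteq> Apex"
  then show "stair_colour r s x y = stair_colour r s y x" and "stair_colour r s x y < r + 1"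
    using stair_colour_sym stair_colour_less unfolding stair_adj_def by auto
next
  fix x y w
  assume adj: "stair_adj r s x y \<and> stair_adj r s x w \<and> y \<noteq> w \<and> x \<noteq> Apex \<and> y \<noteq> Apex \<and> w \<noteq> Apex"
  then have "x \<in> stair_vertices r s"
    using stair_arc_in_vertices[OF _ assms] unfolding stair_adj_def by blast
  then have "inj_on (stair_colour r s x) {y. stair_adj r s x y}"
    using inj_on_stair_colour[OF assms] adj by blast
  with adj show "stair_colour r s x y \<noteq> stair_colour r s x w"
    by (auto dest: inj_onD)
qed

definition edge_image :: "('a \<Rightarrow> 'b) \<Rightarrow> ('a \<Rightarrow> 'a \<Rightarrow> bool) \<Rightarrow> 'b \<Rightarrow> 'b \<Rightarrow> bool" where
  "edge_image f E x y \<longleftrightarrow> (\<exists>a b. x = f a \<and> y = f b \<and> E a b)"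

lemma edge_image_iff:
  assumes "inj f"
  shows "edge_image f E (f a) (f b) \<longleftrightarrow> E a b"
  using assms by (auto simp: edge_image_def dest: injD)

lemma card_edge_image_nbrs:
  assumes "inj f"
  shows "card {w \<in> f ` A. edge_image f E (f v) w} = card {w \<in> A. E v w}"
proof -
  have "{w \<in> f ` A. edge_image f E (f v) w} = f ` {w \<in> A. E v w}"
    using edge_image_iff[OF assms] by auto
  then show ?thesis
    using assms by (simp add: card_image inj_on_subset)
qed

lemma staircase_image:
  assumes inj: "inj f" and st: "staircase r t a0 V E vinf L"
  shows "staircase r t a0 (f ` V) (edge_image f E) (f vinf) (\<lambda>i. f ` L i)"
proof -
  define s where "s = (t - 1) div 2"
  let ?E = "edge_image f E"
  have card: "card {w \<in> f ` A. ?E (f v) w} = card {w \<in> A. E v w}" for A v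
    using card_edge_image_nbrs[OF inj] .
  from st have sg: "simple_graph V E" and V: "V = insert vinf (\<Union>i\<in>{..s}. L i)"
    and apex: "\<forall>i\<le>s. vinf \<notin> L i" and disj: "\<forall>i\<le>s. \<forall>j\<le>s. i \<noteq> j \<longrightarrow> L i \<inter> L j = {}"
    and L0: "card (L 0) = a0" "\<forall>x. E vinf x \<longleftrightarrow> x \<in> L 0"
    and tree: "\<forall>i. (if even t then i < s else i + 2 \<le> s) \<longrightarrow>
           (\<forall>v\<in>L i. card {w\<in>L (Suc i). E v w} = r) \<and> (\<forall>w\<in>L (Suc i). card {v\<in>L i. E w v} = 1)"
    and even_bottom: "even t \<longrightarrow> (\<forall>v\<in>L s. card {w\<in>L s. E v w} = r)"
    and odd_bottom: "odd t \<longrightarrow> (\<forall>v\<in>L (s - 1). card {w\<in>L s. E v w} = r)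
                      \<and> (\<forall>w\<in>L s. card {v\<in>L (s - 1). E w v} = r + 1)"
    and edges: "\<forall>x y. E x y \<longrightarrow> x = vinf \<or> y = vinf
         \<or> (\<exists>i<s. (x \<in> L i \<and> y \<in> L (Suc i)) \<or> (y \<in> L i \<and> x \<in> L (Suc i)))
         \<or> (even t \<and> x \<in> L s \<and> y \<in> L s)"
    unfolding staircase_def Let_def s_def by blast+
  have "simple_graph (f ` V) ?E"
    using sg unfolding simple_graph_def edge_image_def by (auto dest: injD[OF inj])
  moreover have "\<forall>i\<le>s. f vinf \<notin> f ` L i" "\<forall>i\<le>s. \<forall>j\<le>s. i \<noteq> j \<longrightarrow> f ` L i \<inter> f ` L j = {}"
    using apex disj by (simp_all add: inj_image_mem_iff[OF inj] image_Int[OF inj, symmetric])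
  moreover have "card (f ` L 0) = a0"
    using L0(1) inj by (simp add: card_image inj_on_subset)
  moreover have "\<forall>x. ?E (f vinf) x \<longleftrightarrow> x \<in> f ` L 0"
    using L0(2) inj by (auto simp: edge_image_def dest: injD)
  moreover have "\<forall>x y. ?E x y \<longrightarrow> x = f vinf \<or> y = f vinf
         \<or> (\<exists>i<s. (x \<in> f ` L i \<and> y \<in> f ` L (Suc i)) \<or> (y \<in> f ` L i \<and> x \<in> f ` L (Suc i)))
         \<or> (even t \<and> x \<in> f ` L s \<and> y \<in> f ` L s)"
    using edges unfolding edge_image_def by blast
  ultimately show ?thesis
    using V tree even_bottom odd_bottom
    unfolding staircase_def Let_def s_def[symmetric] by (auto simp: card)
qed

lemma proper_edge_colouring_minus_image:
  assumes "inj f" and "proper_edge_colouring_minus V E u k c"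
  shows "proper_edge_colouring_minus (f ` V) (edge_image f E) (f u) k (\<lambda>x y. c (inv f x) (inv f y))"
  using assms unfolding proper_edge_colouring_minus_def edge_image_def
  by (auto simp: inv_f_f[OF assms(1)] inj_eq[OF assms(1)]) blast

(* The construction only needs t \<ge> 4, i.e. 0 < s, and works for every r. *)
theorem mainTheorem13:
  fixes r t :: nat
  assumes "r \<ge> 3" and "t \<ge> 6" and "even t"
  shows "\<exists>(V :: nat set) E vinf L c.
           staircase r t 4 V E vinf L \<and> proper_edge_colouring_minus V E vinf (r + 1) c"
proof -
  define s where "s = (t - 1) div 2"
  have "0 < s"
    using assms(2) unfolding s_def by simp
  then have "staircase r t 4 (stair_vertices r s) (stair_adj r s) Apex (layer r)"
    and "proper_edge_colouring_minus (stair_vertices r s) (stair_adj r s) Apex (r + 1) (stair_colour r s)"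
    using staircase_stair_graph assms(3) s_def proper_stair_colour by blast+
  then show ?thesis
    using staircase_image[OF inj_to_nat] proper_edge_colouring_minus_image[OF inj_to_nat] by blast
qed

end
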